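(* Let $(T_1,T_2,T_3,T_4)$ be an ordered binary forest on $\{1,\dots,m\}$, let $x_i=|L(T_i)|$ for $i=1,2,3,4$, and assume $x_1\ge x_2$, $x_3\ge x_4$ and $x_1>x_3$. Let $T_0$ be the binary phylogenetic tree with root $z$ having children $a$ and $b$, where $a$ has children the roots of $T_1$ and $T_2$, and $b$ has children the roots of $T_3$ and $T_4$. Let $n\ge m$ and let $T$ be a binary phylogenetic tree with $n$ leaves having $T_0$ as the subtree rooted at some node. If $\Phi(T)$ is minimum among all binary phylogenetic trees with $n$ leaves, then $x_4\ge x_2$.
   Context: A phylogenetic tree on a finite set $S$ is a rooted tree whose leaves are bijectively labeled by $S$, every internal node having at least two children; binary means exactly two children; a tree with $n$ leaves is one on $\{1,\dots,n\}$. $L(T)$ is the leaf set. An ordered binary $k$-forest on $S$ is a sequence of $k$ binary phylogenetic trees on pairwise disjoint sets with union $S$. The subtree rooted at a node $v$ is the subgraph induced on the descendants of $v$. The depth $\delta_T(v)$ is the number of arcs from the root to $v$; for leaves $i\ne j$, $\varphi_T(i,j)=\delta_T(LCA_T(i,j))$ ($LCA$ = lowest common ancestor), and $\Phi(T)$ is the sum of $\varphi_T(i,j)$ over all unordered pairs of distinct leaves. *)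

theory Defs
  imports Main
begin

text \<open>Binary phylogenetic trees: a leaf carries a label, an internal node has exactly
two children. The order of children is immaterial for all notions below.\<close>
datatype btree = Leaf nat | Node btree btree

fun leaves_list :: "btree \<Rightarrow> nat list" where
  "leaves_list (Leaf a) = [a]"
| "leaves_list (Node l r) = leaves_list l @ leaves_list r"

definition L :: "btree \<Rightarrow> nat set" where
  "L t = set (leaves_list t)"

definition binary_phylo_on :: "btree \<Rightarrow> nat set \<Rightarrow> bool" where
  "binary_phylo_on t S \<longleftrightarrow> distinct (leaves_list t) \<and> set (leaves_list t) = S"

fun subtrees :: "btree \<Rightarrow> btree set" where
  "subtrees (Leaf a) = {Leaf a}"
| "subtrees (Node l r) = insert (Node l r) (subtrees l \<union> subtrees r)"

fun lca_depth :: "btree \<Rightarrow> nat \<Rightarrow> nat \<Rightarrow> nat" where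
  "lca_depth (Leaf a) i j = 0"
| "lca_depth (Node l r) i j =
     (if i \<in> L l \<and> j \<in> L l then 1 + lca_depth l i j
      else if i \<in> L r \<and> j \<in> L r then 1 + lca_depth r i j
      else 0)"

definition Phi :: "btree \<Rightarrow> nat" where
  "Phi t = (\<Sum>(i,j)\<in>{(i,j). i \<in> L t \<and> j \<in> L t \<and> i < j}. lca_depth t i j)"

definition ordered_binary_4forest_on ::
  "btree \<Rightarrow> btree \<Rightarrow> btree \<Rightarrow> btree \<Rightarrow> nat set \<Rightarrow> bool" where
  "ordered_binary_4forest_on t1 t2 t3 t4 S \<longleftrightarrow>
     (let ts = [t1, t2, t3, t4] in
       (\<forall>t\<in>set ts. distinct (leaves_list t)) \<and>
       (\<forall>a<4. \<forall>b<4. a \<noteq> b \<longrightarrow> L (ts ! a) \<inter> L (ts ! b) = {}) \<and>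
       L t1 \<union> L t2 \<union> L t3 \<union> L t4 = S)"

definition Phi_minimum :: "nat \<Rightarrow> btree \<Rightarrow> bool" where
  "Phi_minimum n t \<longleftrightarrow> binary_phylo_on t {1..n} \<and>
     (\<forall>t'. binary_phylo_on t' {1..n} \<longrightarrow> Phi t \<le> Phi t')"

end

theory Submission
  imports Defs "HOL-Library.Multiset"
begin

(*
  For a tree with distinct leaves, Phi counts, for every pair of
  leaves, the internal nodes strictly below the root that lie above both leaves.
  Regrouping by nodes gives the recursion
     Phi (Node l r) = Phi l + Phi r + C(|l|,2) + C(|r|,2),
  so Phi is additive over subtrees.  Hence replacing a subtree S of T by a tree S'
  on the same leaves changes Phi by exactly Phi S' - Phi S, and in a Phi-minimal
  tree every subtree is Phi-minimal among trees on its leaf set.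

  Suppose x4 < x2 in the situation of the theorem.  Swapping T2 and T4 turns
  S = ((T1,T2),(T3,T4)) into S' = ((T1,T4),(T3,T2)); the subtrees T_i themselves
  are unchanged, so Phi S' - Phi S = C(x1+x4,2) + C(x3+x2,2) - C(x1+x2,2) - C(x3+x4,2),
  which is negative because (x1 - x3)(x2 - x4) > 0.  This contradicts minimality.
*)

lemma card_ordered_pairs:
  fixes A :: "nat set"
  assumes "finite A"
  shows "card {(i,j). i \<in> A \<and> j \<in> A \<and> i < j} = card A choose 2"
  using assms
proof (induction A rule: finite_linorder_max_induct)
  case empty
  then show ?case by simp
next
  case (insert b A)
  have b_new: "b \<notin> A" using insert by auto
  have split: "{(i,j). i \<in> insert b A \<and> j \<in> insert b A \<and> i < j}
     = {(i,j). i \<in> A \<and> j \<in> A \<and> i < j} \<union> (\<lambda>i. (i,b)) ` A"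
    using insert by auto
  have fin: "finite {(i,j). i \<in> A \<and> j \<in> A \<and> i < j}"
    by (rule finite_subset[of _ "A \<times> A"]) (use insert in auto)
  have disj: "{(i,j). i \<in> A \<and> j \<in> A \<and> i < j} \<inter> (\<lambda>i. (i,b)) ` A = {}"
    using insert by auto
  have new_pairs: "card ((\<lambda>i. (i,b)) ` A) = card A"
    by (rule card_image) (auto simp: inj_on_def)
  have "card {(i,j). i \<in> insert b A \<and> j \<in> insert b A \<and> i < j} = (card A choose 2) + card A"
    unfolding split using insert fin disj new_pairs by (subst card_Un_disjoint) auto
  also have "\<dots> = Suc (card A) choose 2"
    by (simp add: numeral_2_eq_2)
  finally show ?case using insert b_new by simp
qed

fun Phi_rec :: "btree \<Rightarrow> nat" where
  "Phi_rec (Leaf a) = 0"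
| "Phi_rec (Node l r) = Phi_rec l + Phi_rec r
     + (length (leaves_list l) choose 2) + (length (leaves_list r) choose 2)"

lemma L_Node [simp]: "L (Node l r) = L l \<union> L r"
  by (simp add: L_def)

lemma finite_L [simp]: "finite (L t)"
  by (simp add: L_def)

lemma card_L: "distinct (leaves_list t) \<Longrightarrow> card (L t) = length (leaves_list t)"
  by (simp add: L_def distinct_card)

text \<open>The pair set of the tree splits into pairs inside l, pairs inside r, and
  pairs separated at the root; only the first two contribute, with one extra
  unit each for the arc from the root.\<close>
lemma Phi_eq_Phi_rec: "distinct (leaves_list t) \<Longrightarrow> Phi t = Phi_rec t"
proof (induction t)
  case (Leaf a)
  then show ?case by (simp add: Phi_def L_def)
next
  case (Node l r)
  have dl: "distinct (leaves_list l)" and dr: "distinct (leaves_list r)"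
    and disj: "L l \<inter> L r = {}"
    using Node.prems by (auto simp: L_def)
  define pairs :: "btree \<Rightarrow> (nat \<times> nat) set"
    where "pairs t = {(i,j). i \<in> L t \<and> j \<in> L t \<and> i < j}" for t
  let ?P = "pairs (Node l r)"
  let ?d = "\<lambda>t x. case x of (i,j) \<Rightarrow> lca_depth t i j"
  have finP: "finite ?P"
    by (rule finite_subset[of _ "L (Node l r) \<times> L (Node l r)"]) (auto simp: pairs_def)
  have in_l: "?P \<inter> pairs l = pairs l" and in_r: "?P \<inter> pairs r = pairs r"
    by (auto simp: pairs_def)
  have root_step: "?d (Node l r) x =
      (if x \<in> pairs l then 1 + ?d l x else 0) + (if x \<in> pairs r then 1 + ?d r x else 0)"
    if "x \<in> ?P" for x
    using that disj by (auto simp: pairs_def)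
  have "Phi (Node l r) = (\<Sum>x\<in>?P. ?d (Node l r) x)"
    by (simp add: Phi_def pairs_def)
  also have "\<dots> = (\<Sum>x\<in>?P. if x \<in> pairs l then 1 + ?d l x else 0)
      + (\<Sum>x\<in>?P. if x \<in> pairs r then 1 + ?d r x else 0)"
    by (subst sum.distrib[symmetric]) (rule sum.cong[OF refl root_step])
  also have "\<dots> = (\<Sum>x\<in>pairs l. 1 + ?d l x) + (\<Sum>x\<in>pairs r. 1 + ?d r x)"
    using finP by (simp add: sum.If_cases in_l in_r)
  also have "\<dots> = card (pairs l) + Phi l + (card (pairs r) + Phi r)"
    by (simp only: sum.distrib card_eq_sum) (simp add: Phi_def pairs_def)
  also have "card (pairs l) = length (leaves_list l) choose 2"
    using dl by (simp add: pairs_def card_ordered_pairs card_L)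
  also have "card (pairs r) = length (leaves_list r) choose 2"
    using dr by (simp add: pairs_def card_ordered_pairs card_L)
  finally show ?case using Node.IH dl dr by simp
qed

lemma replace_subtree:
  assumes "S \<in> subtrees T" and "mset (leaves_list S') = mset (leaves_list S)"
  shows "\<exists>T'. mset (leaves_list T') = mset (leaves_list T)
            \<and> Phi_rec T' + Phi_rec S = Phi_rec T + Phi_rec S'"
  using assms
proof (induction T)
  case (Leaf a)
  then show ?case by (intro exI[of _ S']) auto
next
  case (Node l r)
  consider "S = Node l r" | "S \<in> subtrees l" | "S \<in> subtrees r"
    using Node.prems(1) by auto
  then show ?case
  proof cases
    case 1
    then show ?thesis using Node.prems(2) by (intro exI[of _ S']) auto
  next
    case 2
    from Node.IH(1)[OF this Node.prems(2)] obtain l' where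
      l': "mset (leaves_list l') = mset (leaves_list l)" "Phi_rec l' + Phi_rec S = Phi_rec l + Phi_rec S'"
      by blast
    have "length (leaves_list l') = length (leaves_list l)"
      using l'(1) by (metis size_mset)
    then show ?thesis using l' by (intro exI[of _ "Node l' r"]) auto
  next
    case 3
    from Node.IH(2)[OF this Node.prems(2)] obtain r' where
      r': "mset (leaves_list r') = mset (leaves_list r)" "Phi_rec r' + Phi_rec S = Phi_rec r + Phi_rec S'"
      by blast
    have "length (leaves_list r') = length (leaves_list r)"
      using r'(1) by (metis size_mset)
    then show ?thesis using r' by (intro exI[of _ "Node l r'"]) auto
  qed
qed

lemma Phi_minimum_subtree:
  assumes "Phi_minimum n T" and "S \<in> subtrees T"
    and "mset (leaves_list S') = mset (leaves_list S)"
  shows "Phi_rec S \<le> Phi_rec S'"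
proof -
  obtain T' where T': "mset (leaves_list T') = mset (leaves_list T)"
      "Phi_rec T' + Phi_rec S = Phi_rec T + Phi_rec S'"
    using replace_subtree[OF assms(2,3)] by blast
  have dT: "distinct (leaves_list T)" and sT: "set (leaves_list T) = {1..n}"
    using assms(1) by (auto simp: Phi_minimum_def binary_phylo_on_def)
  have dT': "distinct (leaves_list T')"
    using T'(1) dT mset_eq_imp_distinct_iff by blast
  have "set (leaves_list T') = {1..n}"
    using T'(1) sT by (metis set_mset_mset)
  then have "Phi T \<le> Phi T'"
    using assms(1) dT' by (auto simp: Phi_minimum_def binary_phylo_on_def)
  then have "Phi_rec T \<le> Phi_rec T'"
    using Phi_eq_Phi_rec dT dT' by simp
  with T'(2) show ?thesis by linarith
qed

text \<open>Pairing the larger of a, b with the larger of d, e maximises the sum of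
  binomials C(_,2); the difference is (a - b)(d - e) > 0.\<close>
lemma choose_two_exchange:
  fixes a b d e :: nat
  assumes "a > b" "d > e"
  shows "(a + e choose 2) + (b + d choose 2) < (a + d choose 2) + (b + e choose 2)"
proof -
  have twice: "int (2 * (k choose 2)) = int k * (int k - 1)" for k :: nat
    by (cases k) (simp_all add: choose_two algebra_simps)
  have "(int a - int b) * (int d - int e) > 0"
    using assms by simp
  then have "int (2 * (a + e choose 2)) + int (2 * (b + d choose 2))
      < int (2 * (a + d choose 2)) + int (2 * (b + e choose 2))"
    unfolding twice by (simp add: algebra_simps)
  then show ?thesis by linarith
qed

theorem mainTheorem8:
  fixes T1 T2 T3 T4 T :: btree and m n :: nat
  assumes "ordered_binary_4forest_on T1 T2 T3 T4 {1..m}"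
    and "card (L T1) \<ge> card (L T2)"
    and "card (L T3) \<ge> card (L T4)"
    and "card (L T1) > card (L T3)"
    and "n \<ge> m"
    and "binary_phylo_on T {1..n}"
    and "Node (Node T1 T2) (Node T3 T4) \<in> subtrees T"
    and "Phi_minimum n T"
  shows "card (L T4) \<ge> card (L T2)"
proof (rule ccontr)
  assume "\<not> ?thesis"
  moreover have "card (L Ti) = length (leaves_list Ti)" if "Ti \<in> {T1, T2, T3, T4}" for Ti
    using assms(1) that by (auto simp: ordered_binary_4forest_on_def Let_def card_L)
  ultimately have "Phi_rec (Node (Node T1 T4) (Node T3 T2)) < Phi_rec (Node (Node T1 T2) (Node T3 T4))"
    using choose_two_exchange[where a = "length (leaves_list T1)" and b = "length (leaves_list T3)"
        and d = "length (leaves_list T2)" and e = "length (leaves_list T4)"] assms(4)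
    by (simp add: add.commute)
  moreover have "Phi_rec (Node (Node T1 T2) (Node T3 T4)) \<le> Phi_rec (Node (Node T1 T4) (Node T3 T2))"
    by (rule Phi_minimum_subtree[OF assms(8,7)]) simp
  ultimately show False by simp
qed

end
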